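(* Let $K$ be a simplicial complex, $X\cup Y=K_0$ a cover of its vertex set, $A:=X\cap Y$, and let $P$ be the subposet of the simplex poset of $K$ given by $P:=\{\sigma\in K\mid\sigma\subset X\text{ or }\sigma\subset Y\text{ or }\sigma\cap A\neq\emptyset\}$. Then the poset inclusion $f\colon K_X\cup K_Y\hookrightarrow P$ is a weak equivalence (i.e. induces a weak equivalence of nerves).
   Context: A simplicial complex is a collection of finite nonempty subsets of a fixed set closed under taking nonempty subsets; $K_0$ is its vertex set, and its simplices form a poset under inclusion (the simplex category). For a set $B$, $K_B$ is the subcomplex of simplices of $K$ contained in $B$; $K_X\cup K_Y$ is regarded as a subposet of $P$. *)

theory Defs
  imports "HOL-Analysis.Analysis"
begin

definition simplicial_complex :: "'a set set \<Rightarrow> bool" where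
  "simplicial_complex K \<longleftrightarrow>
     (\<forall>\<sigma>\<in>K. finite \<sigma> \<and> \<sigma> \<noteq> {}) \<and>
     (\<forall>\<sigma>\<in>K. \<forall>\<tau>. \<tau> \<subseteq> \<sigma> \<and> \<tau> \<noteq> {} \<longrightarrow> \<tau> \<in> K)"

definition vertex_set :: "'a set set \<Rightarrow> 'a set" where
  "vertex_set K = \<Union>K"

definition full_subcomplex :: "'a set set \<Rightarrow> 'a set \<Rightarrow> 'a set set" where
  "full_subcomplex K B = {\<sigma>\<in>K. \<sigma> \<subseteq> B}"

definition nerve :: "'b set set \<Rightarrow> 'b set set set" where
  "nerve S = {c. finite c \<and> c \<noteq> {} \<and> c \<subseteq> S \<and>
                 (\<forall>x\<in>c. \<forall>y\<in>c. x \<subseteq> y \<or> y \<subseteq> x)}"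

text \<open>Geometric realization of an abstract simplicial complex L, as barycentric
coordinate functions, with the coherent (weak) topology with respect to the closed
simplices (each carrying its Euclidean topology).\<close>
definition closed_simplex :: "'v set \<Rightarrow> ('v \<Rightarrow> real) set" where
  "closed_simplex \<sigma> = {\<alpha>. (\<forall>v. 0 \<le> \<alpha> v) \<and> (\<forall>v. v \<notin> \<sigma> \<longrightarrow> \<alpha> v = 0) \<and> sum \<alpha> \<sigma> = 1}"

definition realization_carrier :: "'v set set \<Rightarrow> ('v \<Rightarrow> real) set" where
  "realization_carrier L = (\<Union>\<sigma>\<in>L. closed_simplex \<sigma>)"

definition realization :: "'v set set \<Rightarrow> ('v \<Rightarrow> real) topology" where
  "realization L = topology (\<lambda>U. U \<subseteq> realization_carrier L \<and>
     (\<forall>\<sigma>\<in>L. openin (subtopology (product_topology (\<lambda>_. euclideanreal) UNIV) (closed_simplex \<sigma>))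
                     (U \<inter> closed_simplex \<sigma>)))"

text \<open>Weak homotopy equivalence: continuous, and bijective on all pointed homotopy
classes of maps from spheres, for all n and all basepoints (so on pi_0 and all pi_n).\<close>
definition sphere_base :: "nat \<Rightarrow> real" where
  "sphere_base = (\<lambda>i. if i = 0 then 1 else 0)"

definition weak_homotopy_equivalence ::
  "'a topology \<Rightarrow> 'b topology \<Rightarrow> ('a \<Rightarrow> 'b) \<Rightarrow> bool" where
  "weak_homotopy_equivalence X Y f \<longleftrightarrow>
     continuous_map X Y f \<and>
     (\<forall>n. \<forall>x\<in>topspace X.
        (\<forall>g. continuous_map (nsphere n) Y g \<and> g sphere_base = f x \<longrightarrow>
           (\<exists>h. continuous_map (nsphere n) X h \<and> h sphere_base = x \<and>
                homotopic_with (\<lambda>k. k sphere_base = f x) (nsphere n) Y (f \<circ> h) g)) \<and>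
        (\<forall>h1 h2. continuous_map (nsphere n) X h1 \<and> h1 sphere_base = x \<and>
                 continuous_map (nsphere n) X h2 \<and> h2 sphere_base = x \<and>
                 homotopic_with (\<lambda>k. k sphere_base = f x) (nsphere n) Y (f \<circ> h1) (f \<circ> h2)
                 \<longrightarrow> homotopic_with (\<lambda>k. k sphere_base = x) (nsphere n) X h1 h2))"

definition poset_inclusion_weak_equivalence :: "'b set set \<Rightarrow> 'b set set \<Rightarrow> bool" where
  "poset_inclusion_weak_equivalence Q P \<longleftrightarrow> Q \<subseteq> P \<and>
     weak_homotopy_equivalence (realization (nerve Q)) (realization (nerve P)) id"

end

(*
  Write Q = K_X \<union> K_Y.  A chain c of P not contained in Q has a top simplex that lies neither
  in X nor in Y and hence meets A; the union G c of that trace on A with the top element of c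
  inside Q is a simplex of K_X or K_Y, and G is monotone on chains.  In barycentric coordinates
  every point of the realization of the nerve of P is a combination of barycentres of chains;
  moving the barycentre of each chain c not in Q to the vertex G c retracts the realization of
  the nerve of P onto that of Q, and two straight-line homotopies through the prism over the
  barycentric subdivision (first to the top vertex of each such chain, then to G c) stay inside
  the nerve and fix the nerve of Q.  The realizations carry the coherent topology, so the
  retraction is only shown continuous on compact families, which is all that homotopy groups see.
*)
theory Submission
  imports Defs
begin

section \<open>Realizations of simplicial complexes\<close>

definition supp :: "('v \<Rightarrow> real) \<Rightarrow> 'v set" where
  "supp x = {v. x v \<noteq> 0}"

lemma supp_indicator [simp]: "supp (indicator c :: 'v \<Rightarrow> real) = c"
  by (auto simp: supp_def indicator_def)

lemma mem_closed_simplex_iff: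
  "x \<in> closed_simplex C \<longleftrightarrow> (\<forall>v. 0 \<le> x v) \<and> supp x \<subseteq> C \<and> sum x C = 1"
  unfolding closed_simplex_def supp_def by auto

lemma closedin_closed_simplex:
  assumes "finite C"
  shows "closedin (powertop_real UNIV) (closed_simplex C)"
proof -
  have eq: "closed_simplex C =
          (\<Inter>v. {x. x v \<in> (if v \<in> C then {0..} else {0})}) \<inter> {x. sum x C \<in> {1}}"
    unfolding closed_simplex_def by (auto split: if_splits) (metis order.refl)
  have coord: "closedin (powertop_real UNIV) {x. x v \<in> (if v \<in> C then {0..} else {0})}" for v
  proof -
    have "closedin (powertop_real UNIV)
            {x \<in> topspace (powertop_real UNIV). x v \<in> (if v \<in> C then {0..} else {0})}"
      by (rule closedin_continuous_map_preimage [OF continuous_map_product_projection]) auto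
    then show ?thesis by simp
  qed
  have sum: "closedin (powertop_real UNIV) {x. sum x C \<in> {1}}"
  proof -
    have "continuous_map (powertop_real UNIV) euclideanreal (\<lambda>x. sum x C)"
      by (intro continuous_map_sum) (auto intro: continuous_map_product_projection assms)
    then have "closedin (powertop_real UNIV) {x \<in> topspace (powertop_real UNIV). sum x C \<in> {1}}"
      by (rule closedin_continuous_map_preimage) auto
    then show ?thesis by simp
  qed
  show ?thesis
    unfolding eq by (intro closedin_Int closedin_Inter sum) (use coord in auto)
qed

lemma closed_simplex_subset_realization_carrier:
  "\<sigma> \<in> L \<Longrightarrow> closed_simplex \<sigma> \<subseteq> realization_carrier L"
  unfolding realization_carrier_def by blast

lemma openin_realization:
  "openin (realization L) U \<longleftrightarrow> U \<subseteq> realization_carrier L \<and>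
     (\<forall>\<sigma>\<in>L. openin (subtopology (powertop_real UNIV) (closed_simplex \<sigma>)) (U \<inter> closed_simplex \<sigma>))"
proof -
  let ?open_in = "\<lambda>\<sigma>. openin (subtopology (powertop_real UNIV) (closed_simplex \<sigma>))"
  have "istopology (\<lambda>U. U \<subseteq> realization_carrier L \<and> (\<forall>\<sigma>\<in>L. ?open_in \<sigma> (U \<inter> closed_simplex \<sigma>)))"
    unfolding istopology_def
  proof (rule conjI; intro allI impI)
    fix U V assume "U \<subseteq> realization_carrier L \<and> (\<forall>\<sigma>\<in>L. ?open_in \<sigma> (U \<inter> closed_simplex \<sigma>))"
      and "V \<subseteq> realization_carrier L \<and> (\<forall>\<sigma>\<in>L. ?open_in \<sigma> (V \<inter> closed_simplex \<sigma>))"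
    moreover have "U \<inter> V \<inter> closed_simplex \<sigma> = (U \<inter> closed_simplex \<sigma>) \<inter> (V \<inter> closed_simplex \<sigma>)" for \<sigma>
      by blast
    ultimately show "U \<inter> V \<subseteq> realization_carrier L \<and> (\<forall>\<sigma>\<in>L. ?open_in \<sigma> (U \<inter> V \<inter> closed_simplex \<sigma>))"
      by (auto intro: openin_Int)
  next
    fix \<U> assume \<U>: "\<forall>U\<in>\<U>. U \<subseteq> realization_carrier L \<and> (\<forall>\<sigma>\<in>L. ?open_in \<sigma> (U \<inter> closed_simplex \<sigma>))"
    have "?open_in \<sigma> (\<Union>\<U> \<inter> closed_simplex \<sigma>)" if "\<sigma> \<in> L" for \<sigma>
    proof -
      have "\<Union>\<U> \<inter> closed_simplex \<sigma> = (\<Union>U\<in>\<U>. U \<inter> closed_simplex \<sigma>)"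
        by blast
      then show ?thesis
        using \<U> that by (simp only:) (intro openin_Union, auto)
    qed
    then show "\<Union>\<U> \<subseteq> realization_carrier L \<and> (\<forall>\<sigma>\<in>L. ?open_in \<sigma> (\<Union>\<U> \<inter> closed_simplex \<sigma>))"
      using \<U> by blast
  qed
  then show ?thesis
    unfolding realization_def by simp
qed

lemma topspace_realization: "topspace (realization L) = realization_carrier L"
proof -
  have "openin (realization L) (realization_carrier L)"
    unfolding openin_realization
  proof (intro conjI ballI subset_refl)
    fix \<sigma> assume "\<sigma> \<in> L"
    then have "realization_carrier L \<inter> closed_simplex \<sigma> =
                 topspace (subtopology (powertop_real UNIV) (closed_simplex \<sigma>))"
      using closed_simplex_subset_realization_carrier by fastforce
    then show "openin (subtopology (powertop_real UNIV) (closed_simplex \<sigma>))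
                 (realization_carrier L \<inter> closed_simplex \<sigma>)"
      by (metis openin_topspace)
  qed
  then show ?thesis
    by (metis openin_realization openin_subset openin_topspace subset_antisym)
qed

lemma continuous_map_realization_carrier:
  "continuous_map Z (realization L) g \<Longrightarrow> z \<in> topspace Z \<Longrightarrow> g z \<in> realization_carrier L"
  using continuous_map_image_subset_topspace [of Z "realization L" g]
  by (auto simp: topspace_realization)

lemma closedin_realization:
  "closedin (realization L) C \<longleftrightarrow> C \<subseteq> realization_carrier L \<and>
     (\<forall>\<sigma>\<in>L. closedin (subtopology (powertop_real UNIV) (closed_simplex \<sigma>)) (C \<inter> closed_simplex \<sigma>))"
proof -
  have "(realization_carrier L - C) \<inter> closed_simplex \<sigma> = closed_simplex \<sigma> - C \<inter> closed_simplex \<sigma>"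
    if "\<sigma> \<in> L" for \<sigma>
    using closed_simplex_subset_realization_carrier [OF that] by blast
  then show ?thesis
    unfolding closedin_def [of "realization L"] topspace_realization openin_realization
    by (auto simp: closedin_def)
qed

lemma closedin_realization_if_finite_on_simplices:
  fixes L :: "'v set set"
  assumes "T \<subseteq> realization_carrier L" "\<And>\<sigma>. \<sigma> \<in> L \<Longrightarrow> finite (T \<inter> closed_simplex \<sigma>)"
  shows "closedin (realization L) T"
  unfolding closedin_realization
proof (intro conjI ballI assms(1))
  fix \<sigma> assume "\<sigma> \<in> L"
  have "t1_space (powertop_real UNIV :: ('v \<Rightarrow> real) topology)"
    by (simp add: t1_space_product_topology Hausdorff_imp_t1_space)
  then have "closedin (powertop_real UNIV) (T \<inter> closed_simplex \<sigma>)"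
    using assms(2) [OF \<open>\<sigma> \<in> L\<close>] by (simp add: t1_space_closedin_finite)
  then show "closedin (subtopology (powertop_real UNIV) (closed_simplex \<sigma>)) (T \<inter> closed_simplex \<sigma>)"
    by (rule closedin_subset_topspace) blast
qed

lemma continuous_map_realization_powertop:
  fixes L :: "'v set set"
  shows "continuous_map (realization L) (powertop_real UNIV) id"
  unfolding continuous_map_def topspace_realization openin_realization
proof (intro conjI allI impI ballI)
  fix U :: "('v \<Rightarrow> real) set" and \<sigma>
  assume "openin (powertop_real UNIV) U" "\<sigma> \<in> L"
  moreover have "{x \<in> realization_carrier L. id x \<in> U} \<inter> closed_simplex \<sigma> = closed_simplex \<sigma> \<inter> U"
    using closed_simplex_subset_realization_carrier [OF \<open>\<sigma> \<in> L\<close>] by auto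
  ultimately show "openin (subtopology (powertop_real UNIV) (closed_simplex \<sigma>))
                     ({x \<in> realization_carrier L. id x \<in> U} \<inter> closed_simplex \<sigma>)"
    by (simp add: openin_subtopology_Int2)
qed auto

lemma continuous_map_realization_subcomplex:
  assumes "L \<subseteq> L'"
  shows "continuous_map (realization L) (realization L') id"
  unfolding continuous_map_def topspace_realization
proof (intro conjI allI impI)
  show "id \<in> realization_carrier L \<rightarrow> realization_carrier L'"
    using assms by (auto simp: realization_carrier_def)
  fix U assume U: "openin (realization L') U"
  show "openin (realization L) {x \<in> realization_carrier L. id x \<in> U}"
    unfolding openin_realization
  proof (intro conjI ballI)
    fix \<sigma> assume "\<sigma> \<in> L"
    then have "{x \<in> realization_carrier L. id x \<in> U} \<inter> closed_simplex \<sigma> = U \<inter> closed_simplex \<sigma>"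
      using closed_simplex_subset_realization_carrier by fastforce
    then show "openin (subtopology (powertop_real UNIV) (closed_simplex \<sigma>))
                 ({x \<in> realization_carrier L. id x \<in> U} \<inter> closed_simplex \<sigma>)"
      using U \<open>\<sigma> \<in> L\<close> assms by (auto simp: openin_realization)
  qed blast
qed

lemma simplicial_complexD:
  assumes "simplicial_complex L" "\<sigma> \<in> L"
  shows "finite \<sigma>" "\<sigma> \<noteq> {}" "\<And>\<tau>. \<tau> \<subseteq> \<sigma> \<Longrightarrow> \<tau> \<noteq> {} \<Longrightarrow> \<tau> \<in> L"
  using assms unfolding simplicial_complex_def by blast+

lemma mem_realization_carrier_iff:
  assumes "simplicial_complex L"
  shows "x \<in> realization_carrier L \<longleftrightarrow> (\<forall>v. 0 \<le> x v) \<and> supp x \<in> L \<and> sum x (supp x) = 1"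
proof
  assume "x \<in> realization_carrier L"
  then obtain C where C: "C \<in> L" "x \<in> closed_simplex C"
    unfolding realization_carrier_def by blast
  then have x: "\<forall>v. 0 \<le> x v" "supp x \<subseteq> C" "sum x C = 1"
    by (auto simp: mem_closed_simplex_iff)
  have "sum x (supp x) = sum x C"
    using simplicial_complexD(1) [OF assms C(1)] x(2)
    by (intro sum.mono_neutral_left) (auto simp: supp_def)
  with x have "sum x (supp x) = 1" "supp x \<noteq> {}"
    by auto
  moreover have "supp x \<in> L"
    using simplicial_complexD(3) [OF assms C(1) x(2)] calculation(2) .
  ultimately show "(\<forall>v. 0 \<le> x v) \<and> supp x \<in> L \<and> sum x (supp x) = 1"
    using x by blast
next
  assume "(\<forall>v. 0 \<le> x v) \<and> supp x \<in> L \<and> sum x (supp x) = 1"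
  then have "x \<in> closed_simplex (supp x)" "supp x \<in> L"
    by (auto simp: mem_closed_simplex_iff)
  then show "x \<in> realization_carrier L"
    unfolding realization_carrier_def by blast
qed

lemma finite_supp_realization:
  "simplicial_complex L \<Longrightarrow> x \<in> realization_carrier L \<Longrightarrow> finite (supp x)"
  using mem_realization_carrier_iff simplicial_complexD(1) by blast

lemma realization_le_1:
  assumes "simplicial_complex L" "x \<in> realization_carrier L"
  shows "x v \<le> 1"
proof (cases "v \<in> supp x")
  case True
  have "\<forall>v. 0 \<le> x v" "sum x (supp x) = 1"
    using assms by (simp_all add: mem_realization_carrier_iff)
  moreover have "x v \<le> sum x (supp x)"
    using True finite_supp_realization [OF assms] calculation(1) by (intro member_le_sum) auto
  ultimately show ?thesis
    by simp
qed (simp add: supp_def)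

text \<open>Maps into the realization with supports in a fixed finite set stay in a finite subcomplex,
  where the coherent topology agrees with the product topology.\<close>

lemma continuous_map_into_realization:
  assumes L: "simplicial_complex L"
    and f: "continuous_map Z (powertop_real UNIV) f" and "finite E"
    and f_in: "\<And>z. z \<in> topspace Z \<Longrightarrow> f z \<in> realization_carrier L \<and> supp (f z) \<subseteq> E"
  shows "continuous_map Z (realization L) f"
  unfolding continuous_map_closedin
proof (intro conjI allI impI)
  show "f \<in> topspace Z \<rightarrow> topspace (realization L)"
    using f_in by (auto simp: topspace_realization)
  fix C assume C: "closedin (realization L) C"
  have "{z \<in> topspace Z. f z \<in> C} = (\<Union>D\<in>L \<inter> Pow E. {z \<in> topspace Z. f z \<in> C \<inter> closed_simplex D})"
  proof -
    have "supp (f z) \<in> L \<inter> Pow E \<and> f z \<in> closed_simplex (supp (f z))" if "z \<in> topspace Z" for z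
      using f_in [OF that] L by (auto simp: mem_realization_carrier_iff mem_closed_simplex_iff)
    then show ?thesis
      by blast
  qed
  moreover have "closedin Z {z \<in> topspace Z. f z \<in> C \<inter> closed_simplex D}" if "D \<in> L \<inter> Pow E" for D
  proof (rule closedin_continuous_map_preimage [OF f])
    have "finite D"
      using that \<open>finite E\<close> finite_subset by blast
    then show "closedin (powertop_real UNIV) (C \<inter> closed_simplex D)"
      using C that
      by (intro closedin_trans_full [OF _ closedin_closed_simplex])
        (auto simp: closedin_realization)
  qed
  ultimately show "closedin Z {z \<in> topspace Z. f z \<in> C}"
    using \<open>finite E\<close> by (auto intro!: closedin_Union)
qed

lemma inj_on_representatives:
  obtains R where "R \<subseteq> K" "inj_on f R" "f ` R = f ` K"
proof
  show "inv_into K f ` f ` K \<subseteq> K"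
    by (auto intro: inv_into_into)
  show "inj_on f (inv_into K f ` f ` K)"
    by (rule inj_on_inverseI [where g = "inv_into K f"]) (auto simp: f_inv_into_f)
  show "f ` inv_into K f ` f ` K = f ` K"
    by (force simp: image_image f_inv_into_f)
qed

lemma compactin_subsets_closedin_imp_finite:
  assumes "compactin X K" and closed: "\<And>T. T \<subseteq> K \<Longrightarrow> closedin X T"
  shows "finite K"
proof (rule ccontr)
  assume "infinite K"
  then obtain x where x: "x \<in> K" "x \<in> X derived_set_of K"
    using compactin_imp_Bolzano_Weierstrass [OF assms(1), of K] by blast
  define T where "T = topspace X - (K - {x})"
  have "openin X T"
    using closed [of "K - {x}"] by (simp add: closedin_def T_def)
  moreover have "x \<in> T"
    using x compactin_subset_topspace [OF assms(1)] by (auto simp: T_def)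
  ultimately have "\<exists>y. y \<noteq> x \<and> y \<in> K \<and> y \<in> T"
    using x(2) unfolding in_derived_set_of by blast
  then show False
    by (auto simp: T_def)
qed

text \<open>Choosing one point of \<open>K\<close> per support gives a set meeting every closed simplex in finitely
  many points; all its subsets are closed, so compactness makes it finite.\<close>

lemma compactin_realization_finite_supp:
  assumes L: "simplicial_complex L" and K: "compactin (realization L) K"
  obtains E where "finite E" "\<And>x. x \<in> K \<Longrightarrow> supp x \<subseteq> E"
proof -
  have K_carrier: "K \<subseteq> realization_carrier L"
    using compactin_subset_topspace [OF K] by (simp add: topspace_realization)
  obtain R where R: "R \<subseteq> K" "inj_on supp R" "supp ` R = supp ` K"
    by (rule inj_on_representatives)
  have closed: "closedin (realization L) T" if "T \<subseteq> R" for T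
  proof (rule closedin_realization_if_finite_on_simplices)
    show "T \<subseteq> realization_carrier L"
      using that R K_carrier by blast
    fix C assume "C \<in> L"
    have "supp ` (T \<inter> closed_simplex C) \<subseteq> Pow C"
      by (auto simp: mem_closed_simplex_iff)
    then have "finite (supp ` (T \<inter> closed_simplex C))"
      using simplicial_complexD(1) [OF L \<open>C \<in> L\<close>] by (simp add: finite_subset)
    moreover have "inj_on supp (T \<inter> closed_simplex C)"
      using inj_on_subset [OF R(2)] that by blast
    ultimately show "finite (T \<inter> closed_simplex C)"
      by (rule finite_imageD)
  qed
  have "compactin (realization L) R"
    by (rule closed_compactin [OF K R(1) closed [OF subset_refl]])
  then have "finite (supp ` K)"
    using compactin_subsets_closedin_imp_finite [OF _ closed] R(3) by (metis finite_imageI)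
  moreover have "finite \<sigma>" if "\<sigma> \<in> supp ` K" for \<sigma>
    using that K_carrier finite_supp_realization [OF L] by blast
  ultimately have "finite (\<Union>(supp ` K))"
    by (rule finite_Union [OF _ ], simp)
  then show ?thesis
    using that by blast
qed

lemma mem_nerve_iff:
  "c \<in> nerve S \<longleftrightarrow> finite c \<and> c \<noteq> {} \<and> c \<subseteq> S \<and> chain\<^sub>\<subseteq> c"
  by (simp add: nerve_def chain_subset_def)

lemma simplicial_complex_nerve: "simplicial_complex (nerve S)"
  unfolding simplicial_complex_def
proof (rule conjI; intro ballI allI impI)
  fix \<sigma> assume "\<sigma> \<in> nerve S"
  then show "finite \<sigma> \<and> \<sigma> \<noteq> {}"
    by (simp add: mem_nerve_iff)
next
  fix \<sigma> \<tau> assume "\<sigma> \<in> nerve S" "\<tau> \<subseteq> \<sigma> \<and> \<tau> \<noteq> {}"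
  then show "\<tau> \<in> nerve S"
    using finite_subset unfolding mem_nerve_iff chain_subset_def by blast
qed

lemma nerve_mono: "Q \<subseteq> P \<Longrightarrow> nerve Q \<subseteq> nerve P"
  unfolding nerve_def by auto

section \<open>Barycentric coordinates and prism maps\<close>

text \<open>For \<open>x \<ge> 0\<close> on a finite set \<open>E\<close>, \<open>x = (\<Sum>c. layer x E c * indicator c)\<close> over the
  nonempty \<open>c \<subseteq> E\<close> (lemma \<open>sum_layers_indicator\<close>): the layers are the coordinates of \<open>x\<close> in
  the barycentric subdivision, and only superlevel sets of \<open>x\<close> carry a positive layer.
  Cutting every layer at height \<open>s\<close> splits it into \<open>layer_above\<close> and \<open>layer_below\<close>.\<close>

definition level_outside :: "('v \<Rightarrow> real) \<Rightarrow> 'v set \<Rightarrow> 'v set \<Rightarrow> real" where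
  "level_outside x E c = Max (insert 0 (x ` (E - c)))"

definition layer :: "('v \<Rightarrow> real) \<Rightarrow> 'v set \<Rightarrow> 'v set \<Rightarrow> real" where
  "layer x E c = max 0 (Min (x ` c) - level_outside x E c)"

definition layer_above :: "('v \<Rightarrow> real) \<Rightarrow> 'v set \<Rightarrow> real \<Rightarrow> 'v set \<Rightarrow> real" where
  "layer_above x E s c = max 0 (Min (x ` c) - max (level_outside x E c) s)"

definition layer_below :: "('v \<Rightarrow> real) \<Rightarrow> 'v set \<Rightarrow> real \<Rightarrow> 'v set \<Rightarrow> real" where
  "layer_below x E s c = max 0 (min (Min (x ` c)) s - level_outside x E c)"

lemma layer_above_add_below: "layer_above x E s c + layer_below x E s c = layer x E c"
  unfolding layer_above_def layer_below_def layer_def by (auto simp: max_def min_def)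

lemma layer_nonneg [simp]: "0 \<le> layer x E c"
  and layer_above_nonneg [simp]: "0 \<le> layer_above x E s c"
  and layer_below_nonneg [simp]: "0 \<le> layer_below x E s c"
  by (simp_all add: layer_def layer_above_def layer_below_def)

lemma level_outside_nonneg: "finite E \<Longrightarrow> 0 \<le> level_outside x E c"
  unfolding level_outside_def by (rule Max_ge) auto

lemma le_level_outside: "finite E \<Longrightarrow> v \<in> E - c \<Longrightarrow> x v \<le> level_outside x E c"
  unfolding level_outside_def by (rule Max_ge) auto

lemma layer_eq_0_if_le:
  assumes "finite E" "c \<subseteq> E" "u \<in> c" "v \<in> E - c" "x u \<le> x v"
  shows "layer x E c = 0"
proof -
  have "Min (x ` c) \<le> x u"
    using assms finite_subset [OF assms(2)] by (intro Min_le) auto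
  also have "\<dots> \<le> x v"
    by (fact assms(5))
  also have "\<dots> \<le> level_outside x E c"
    using assms(1,4) by (rule le_level_outside)
  finally show ?thesis
    by (simp add: layer_def)
qed

lemma layer_pos_superlevel:
  assumes "finite E" "c \<subseteq> E" "0 < layer x E c" "p \<in> E"
  shows "p \<in> c \<longleftrightarrow> Min (x ` c) \<le> x p"
proof
  show "p \<in> c \<Longrightarrow> Min (x ` c) \<le> x p"
    using assms finite_subset [OF assms(2)] by (intro Min_le) auto
  assume le: "Min (x ` c) \<le> x p"
  show "p \<in> c"
  proof (rule ccontr)
    assume "p \<notin> c"
    then have "x p \<le> level_outside x E c"
      using assms by (intro le_level_outside) auto
    with le have "layer x E c = 0"
      by (simp add: layer_def)
    with assms(3) show False
      by simp
  qed
qed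

lemma layers_pos_nested:
  assumes E: "finite E" and c: "c \<subseteq> E" "0 < layer x E c" and c': "c' \<subseteq> E" "0 < layer x E c'"
  shows "c \<subseteq> c' \<or> c' \<subseteq> c"
proof -
  have "d' \<subseteq> d" if "d \<subseteq> E" "0 < layer x E d" "d' \<subseteq> E" "0 < layer x E d'"
    and "Min (x ` d) \<le> Min (x ` d')" for d d'
  proof
    fix p assume "p \<in> d'"
    then have "Min (x ` d') \<le> x p" "p \<in> E"
      using layer_pos_superlevel [OF E that(3,4)] that(3) by auto
    then show "p \<in> d"
      using layer_pos_superlevel [OF E that(1,2)] that(5) by auto
  qed
  then show ?thesis
    using c c' by (meson linear)
qed

lemma layer_above_below_subset:
  assumes "finite E" "c \<subseteq> E" "0 < layer_above x E s c" "0 < layer_below x E s c'"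
  shows "c \<subseteq> c'"
proof
  fix p assume "p \<in> c"
  then have "Min (x ` c) \<le> x p"
    using assms finite_subset [OF assms(2)] by (intro Min_le) auto
  moreover have "s < Min (x ` c)" "level_outside x E c' < s"
    using assms(3,4)
    by (auto simp: layer_above_def layer_below_def max_def min_def split: if_splits)
  ultimately have "\<not> x p \<le> level_outside x E c'"
    by linarith
  then show "p \<in> c'"
    using le_level_outside [OF assms(1)] \<open>p \<in> c\<close> assms(2) by blast
qed

lemma layer_above_pos_imp_layer_pos: "0 < layer_above x E s c \<Longrightarrow> 0 < layer x E c"
  and layer_below_pos_imp_layer_pos: "0 < layer_below x E s c \<Longrightarrow> 0 < layer x E c"
  using layer_above_add_below [of x E s c] layer_above_nonneg [of x E s c]
    layer_below_nonneg [of x E s c] by linarith+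

lemma level_outside_supp:
  assumes "supp x \<subseteq> E"
  shows "level_outside x E c = level_outside x (supp x) c"
proof -
  have "insert 0 (x ` (E - c)) = insert 0 (x ` (supp x - c))"
    using assms by (auto simp: supp_def)
  then show ?thesis
    by (simp add: level_outside_def)
qed

lemma layers_eq_0_if_zero:
  assumes "finite E" "c \<subseteq> E" "p \<in> c" "x p = 0"
  shows "layer x E c = 0" "layer_above x E s c = 0" "layer_below x E s c = 0"
proof -
  have "Min (x ` c) \<le> 0"
    using assms finite_subset [OF assms(2)] Min_le [of "x ` c" "x p"] by auto
  moreover have "0 \<le> level_outside x E c"
    using assms(1) by (rule level_outside_nonneg)
  ultimately show "layer x E c = 0" "layer_above x E s c = 0" "layer_below x E s c = 0"
    by (auto simp: layer_def layer_above_def layer_below_def)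
qed

lemma layer_full:
  assumes "finite E" "E \<noteq> {}" "\<forall>v\<in>E. 0 \<le> x v"
  shows "layer x E E = Min (x ` E)"
  using assms by (simp add: layer_def level_outside_def)

lemma layer_shift_min:
  assumes E: "finite E" and z: "z \<in> E" "\<forall>v\<in>E. x z \<le> x v" "0 \<le> x z"
    and c: "c \<subseteq> E - {z}" "c \<noteq> {}"
  shows "layer x E c = layer (\<lambda>v. x v - x z) (E - {z}) c"
proof -
  let ?y = "\<lambda>v. x v + - x z"
  have fin: "finite c" "finite (E - c)"
    using E c finite_subset by auto
  have zc: "z \<in> E - c"
    using z c by auto
  have "Max (x ` (E - c)) \<ge> x z"
    using fin zc by (intro Max_ge) auto
  moreover have "Max (insert 0 (x ` (E - c))) = max 0 (Max (x ` (E - c)))"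
    using fin zc by (intro Max_insert) auto
  ultimately have "level_outside x E c = Max (x ` (E - c))"
    using z(3) by (simp add: level_outside_def)
  moreover have "level_outside ?y (E - {z}) c = Max (?y ` (E - c))"
  proof -
    have "insert 0 (?y ` (E - {z} - c)) = ?y ` (E - c)"
      using zc by auto
    then show ?thesis
      by (simp add: level_outside_def)
  qed
  moreover have "Max (?y ` (E - c)) = Max (x ` (E - c)) + - x z"
    using fin zc by (intro Max_add_commute) auto
  moreover have "Min (?y ` c) = Min (x ` c) + - x z"
    using fin c by (intro Min_add_commute) auto
  ultimately show ?thesis
    by (simp add: layer_def)
qed

lemma sum_layers_containing_min:
  assumes E: "finite E" "\<forall>v\<in>E. 0 \<le> x v" and z: "z \<in> E" "\<forall>v\<in>E. x z \<le> x v" and "p \<in> E"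
  shows "(\<Sum>c\<in>{c \<in> Pow E. p \<in> c \<and> z \<in> c}. layer x E c) = x z"
proof -
  have "(\<Sum>c\<in>{c \<in> Pow E. p \<in> c \<and> z \<in> c}. layer x E c) = (\<Sum>c\<in>{E}. layer x E c)"
  proof (rule sum.mono_neutral_right)
    show "\<forall>c\<in>{c \<in> Pow E. p \<in> c \<and> z \<in> c} - {E}. layer x E c = 0"
    proof
      fix c assume c: "c \<in> {c \<in> Pow E. p \<in> c \<and> z \<in> c} - {E}"
      then obtain v where "v \<in> E - c"
        by blast
      then show "layer x E c = 0"
        using c z E(1) by (intro layer_eq_0_if_le [of E c z v]) auto
    qed
  qed (use assms in auto)
  also have "\<dots> = Min (x ` E)"
    using layer_full [OF E(1) _ E(2)] z by auto
  also have "\<dots> = x z"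
    using E(1) z by (intro Min_eqI) auto
  finally show ?thesis .
qed

lemma sum_layers_containing:
  assumes "finite E" "\<forall>v\<in>E. 0 \<le> x v" "p \<in> E"
  shows "(\<Sum>c\<in>{c \<in> Pow E. p \<in> c}. layer x E c) = x p"
  using assms
proof (induction "card E" arbitrary: E x p rule: less_induct)
  case less
  then have E: "finite E" "E \<noteq> {}"
    by auto
  then have "Min (x ` E) \<in> x ` E"
    by simp
  then obtain z where "z \<in> E" "x z = Min (x ` E)"
    by auto
  then have z: "z \<in> E" "\<forall>v\<in>E. x z \<le> x v"
    using E by simp_all
  define E' where "E' = E - {z}"
  define y where "y v = x v - x z" for v
  have "(\<Sum>c\<in>{c \<in> Pow E'. p \<in> c}. layer x E c) = x p - x z"
  proof (cases "p = z")
    case True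
    then have "{c \<in> Pow E'. p \<in> c} = {}"
      by (auto simp: E'_def)
    then show ?thesis
      using True by (simp only: sum.empty diff_self)
  next
    case False
    have "(\<Sum>c\<in>{c \<in> Pow E'. p \<in> c}. layer x E c) = (\<Sum>c\<in>{c \<in> Pow E'. p \<in> c}. layer y E' c)"
      using E(1) z less.prems(2) unfolding E'_def y_def
      by (intro sum.cong refl layer_shift_min) auto
    also have "\<dots> = y p"
      using less.prems z(2) False card_Diff1_less [OF E(1) z(1)]
      by (intro less.hyps) (auto simp: E'_def y_def)
    finally show ?thesis
      by (simp add: y_def)
  qed
  moreover have "{c \<in> Pow E. p \<in> c} = {c \<in> Pow E'. p \<in> c} \<union> {c \<in> Pow E. p \<in> c \<and> z \<in> c}"
    by (auto simp: E'_def)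
  then have "(\<Sum>c\<in>{c \<in> Pow E. p \<in> c}. layer x E c) =
      (\<Sum>c\<in>{c \<in> Pow E'. p \<in> c}. layer x E c) + (\<Sum>c\<in>{c \<in> Pow E. p \<in> c \<and> z \<in> c}. layer x E c)"
    using E(1) by (subst sum.union_disjoint [symmetric]) (auto simp: E'_def)
  ultimately show ?case
    using sum_layers_containing_min [OF E(1) less.prems(2) z less.prems(3)] by simp
qed

lemma sum_layers_indicator:
  assumes "finite E" "\<forall>v. 0 \<le> x v" "supp x \<subseteq> E"
  shows "(\<lambda>w. \<Sum>c\<in>Pow E - {{}}. layer x E c * indicator c w) = x"
proof
  fix w
  show "(\<Sum>c\<in>Pow E - {{}}. layer x E c * indicator c w) = x w"
  proof (cases "w \<in> E")
    case True
    have "(\<Sum>c\<in>Pow E - {{}}. layer x E c * indicator c w) = (\<Sum>c\<in>{c \<in> Pow E. w \<in> c}. layer x E c)"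
      by (rule sum.mono_neutral_cong_right) (use assms(1) in auto)
    then show ?thesis
      using sum_layers_containing [OF assms(1) _ True] assms(2) by simp
  next
    case False
    then have "x w = 0"
      using assms(3) by (auto simp: supp_def)
    moreover have "indicator c w = (0::real)" if "c \<in> Pow E - {{}}" for c
    proof -
      have "w \<notin> c"
        using that False by blast
      then show ?thesis
        by simp
    qed
    ultimately show ?thesis
      by simp
  qed
qed

lemma sum_layers_card:
  assumes "finite E" "\<forall>v. 0 \<le> x v" "supp x \<subseteq> E"
  shows "(\<Sum>c\<in>Pow E - {{}}. layer x E c * real (card c)) = sum x E"
proof -
  have "real (card c) = (\<Sum>w\<in>E. indicator c w)" if "c \<in> Pow E - {{}}" for c
    using that assms(1) by (simp add: indicator_def of_bool_def sum.If_cases Int_absorb1)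
  then have "(\<Sum>c\<in>Pow E - {{}}. layer x E c * real (card c)) =
      (\<Sum>c\<in>Pow E - {{}}. \<Sum>w\<in>E. layer x E c * indicator c w)"
    by (simp add: sum_distrib_left)
  also have "\<dots> = (\<Sum>w\<in>E. \<Sum>c\<in>Pow E - {{}}. layer x E c * indicator c w)"
    by (rule sum.swap)
  also have "\<dots> = sum x E"
    by (simp add: sum_layers_indicator [OF assms, THEN fun_cong])
  finally show ?thesis .
qed

text \<open>\<open>F c\<close> stands for \<open>card c\<close> times the image of the barycentre of the face \<open>c\<close>, so that
  \<open>subdivision_map F\<close> is affine on the barycentric subdivision, and \<open>indicator\<close> gives the identity.
  \<open>prism_map s F1 F2\<close> applies \<open>F1\<close> to the parts of the layers above \<open>s\<close> and \<open>F2\<close> to those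
  below, moving from \<open>subdivision_map F2\<close> at \<open>s = 1\<close> to \<open>subdivision_map F1\<close> at \<open>s = 0\<close>;
  \<open>prism_map_on E\<close> is the same map written over a fixed finite \<open>E \<supseteq> supp x\<close>, where its
  continuity in \<open>x\<close> is visible.\<close>

definition subdivision_map :: "('v set \<Rightarrow> 'w \<Rightarrow> real) \<Rightarrow> ('v \<Rightarrow> real) \<Rightarrow> 'w \<Rightarrow> real"
  where "subdivision_map F x = (\<lambda>w. \<Sum>c\<in>Pow (supp x) - {{}}. layer x (supp x) c * F c w)"

definition prism_map_on ::
  "'v set \<Rightarrow> real \<Rightarrow> ('v set \<Rightarrow> 'w \<Rightarrow> real) \<Rightarrow> ('v set \<Rightarrow> 'w \<Rightarrow> real) \<Rightarrow> ('v \<Rightarrow> real) \<Rightarrow> 'w \<Rightarrow> real"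
  where "prism_map_on E s F1 F2 x =
    (\<lambda>w. \<Sum>c\<in>Pow E - {{}}. layer_above x E s c * F1 c w + layer_below x E s c * F2 c w)"

definition prism_map ::
  "real \<Rightarrow> ('v set \<Rightarrow> 'w \<Rightarrow> real) \<Rightarrow> ('v set \<Rightarrow> 'w \<Rightarrow> real) \<Rightarrow> ('v \<Rightarrow> real) \<Rightarrow> 'w \<Rightarrow> real"
  where "prism_map s F1 F2 x = prism_map_on (supp x) s F1 F2 x"

definition prism_support ::
  "real \<Rightarrow> ('v set \<Rightarrow> 'w \<Rightarrow> real) \<Rightarrow> ('v set \<Rightarrow> 'w \<Rightarrow> real) \<Rightarrow> ('v \<Rightarrow> real) \<Rightarrow> 'w set"
  where "prism_support s F1 F2 x =
    (\<Union>c\<in>{c \<in> Pow (supp x) - {{}}. 0 < layer_above x (supp x) s c}. supp (F1 c)) \<union>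
    (\<Union>c\<in>{c \<in> Pow (supp x) - {{}}. 0 < layer_below x (supp x) s c}. supp (F2 c))"

lemma prism_map_on_eq_prism_map:
  assumes "finite E" "supp x \<subseteq> E"
  shows "prism_map_on E s F1 F2 x = prism_map s F1 F2 x"
  unfolding prism_map_def prism_map_on_def
proof (rule ext, rule sum.mono_neutral_cong_right)
  fix w
  show "finite (Pow E - {{}})" "Pow (supp x) - {{}} \<subseteq> Pow E - {{}}"
    using assms by auto
  show "\<forall>c\<in>Pow E - {{}} - (Pow (supp x) - {{}}).
          layer_above x E s c * F1 c w + layer_below x E s c * F2 c w = 0"
  proof
    fix c assume c: "c \<in> Pow E - {{}} - (Pow (supp x) - {{}})"
    then obtain p where "p \<in> c" "x p = 0"
      by (auto simp: supp_def)
    then show "layer_above x E s c * F1 c w + layer_below x E s c * F2 c w = 0"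
      using layers_eq_0_if_zero [OF assms(1)] c by auto
  qed
  show "layer_above x E s c * F1 c w + layer_below x E s c * F2 c w =
        layer_above x (supp x) s c * F1 c w + layer_below x (supp x) s c * F2 c w" for c
    by (simp add: layer_above_def layer_below_def level_outside_supp [OF assms(2)])
qed

lemma prism_map_0:
  assumes "finite (supp x)"
  shows "prism_map 0 F1 F2 x = subdivision_map F1 x"
  unfolding prism_map_def prism_map_on_def subdivision_map_def
proof (rule ext, rule sum.cong [OF refl])
  fix w c
  have "0 \<le> level_outside x (supp x) c"
    using assms by (rule level_outside_nonneg)
  then have "layer_above x (supp x) 0 c = layer x (supp x) c" "layer_below x (supp x) 0 c = 0"
    by (auto simp: layer_above_def layer_below_def layer_def max_def min_def)
  then show "layer_above x (supp x) 0 c * F1 c w + layer_below x (supp x) 0 c * F2 c w =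
             layer x (supp x) c * F1 c w"
    by simp
qed

lemma prism_map_1:
  assumes "finite (supp x)" "\<forall>v. x v \<le> 1"
  shows "prism_map 1 F1 F2 x = subdivision_map F2 x"
  unfolding prism_map_def prism_map_on_def subdivision_map_def
proof (rule ext, rule sum.cong [OF refl])
  fix w c assume c: "c \<in> Pow (supp x) - {{}}"
  then obtain p where "p \<in> c"
    by auto
  moreover have "finite c"
    using c assms(1) finite_subset by auto
  ultimately have "Min (x ` c) \<le> x p"
    by (intro Min_le) auto
  then have "Min (x ` c) \<le> 1"
    using assms(2) [rule_format, of p] by linarith
  then have "layer_above x (supp x) 1 c = 0" "layer_below x (supp x) 1 c = layer x (supp x) c"
    by (auto simp: layer_above_def layer_below_def layer_def max_def min_def)
  then show "layer_above x (supp x) 1 c * F1 c w + layer_below x (supp x) 1 c * F2 c w =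
             layer x (supp x) c * F2 c w"
    by simp
qed

lemma subdivision_map_indicator:
  assumes "finite (supp x)" "\<forall>v. 0 \<le> x v"
  shows "subdivision_map indicator x = x"
  unfolding subdivision_map_def by (rule sum_layers_indicator [OF assms subset_refl])

lemma prism_map_eq_self:
  assumes "finite (supp x)" "\<forall>v. 0 \<le> x v"
    and "\<And>c. c \<subseteq> supp x \<Longrightarrow> c \<noteq> {} \<Longrightarrow> F1 c = indicator c \<and> F2 c = indicator c"
  shows "prism_map s F1 F2 x = x"
proof -
  have "prism_map s F1 F2 x = subdivision_map indicator x"
    unfolding prism_map_def prism_map_on_def subdivision_map_def
  proof (rule ext, rule sum.cong [OF refl])
    fix w c assume "c \<in> Pow (supp x) - {{}}"
    then have "F1 c = indicator c" "F2 c = indicator c"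
      using assms(3) by auto
    then show "layer_above x (supp x) s c * F1 c w + layer_below x (supp x) s c * F2 c w =
               layer x (supp x) c * indicator c w"
      by (simp only: distrib_right [symmetric] layer_above_add_below)
  qed
  then show ?thesis
    using subdivision_map_indicator [OF assms(1,2)] by simp
qed

lemma supp_prism_map_subset: "supp (prism_map s F1 F2 x) \<subseteq> prism_support s F1 F2 x"
proof
  fix w assume "w \<in> supp (prism_map s F1 F2 x)"
  then have "prism_map s F1 F2 x w \<noteq> 0"
    by (simp add: supp_def)
  then obtain c where c: "c \<in> Pow (supp x) - {{}}"
    "layer_above x (supp x) s c * F1 c w + layer_below x (supp x) s c * F2 c w \<noteq> 0"
    unfolding prism_map_def prism_map_on_def by (meson sum.not_neutral_contains_not_neutral)
  then consider "0 < layer_above x (supp x) s c" "F1 c w \<noteq> 0"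
    | "0 < layer_below x (supp x) s c" "F2 c w \<noteq> 0"
    using layer_above_nonneg [of x "supp x" s c] layer_below_nonneg [of x "supp x" s c]
    by (metis add.right_neutral less_eq_real_def mult_zero_left mult_zero_right)
  then show "w \<in> prism_support s F1 F2 x"
    by cases (use c in \<open>auto simp: prism_support_def supp_def\<close>)
qed

definition mass_on :: "'w set \<Rightarrow> real \<Rightarrow> ('w \<Rightarrow> real) \<Rightarrow> bool" where
  "mass_on P m f \<longleftrightarrow> (\<forall>w. 0 \<le> f w) \<and> finite (supp f) \<and> supp f \<subseteq> P \<and> sum f (supp f) = m"

lemma sum_mass_on:
  assumes "mass_on P m f" "finite D" "supp f \<subseteq> D"
  shows "sum f D = m"
proof -
  have "sum f (supp f) = sum f D"
    by (rule sum.mono_neutral_left) (use assms in \<open>auto simp: supp_def\<close>)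
  then show ?thesis
    using assms(1) by (simp add: mass_on_def)
qed

lemma chain_subset_subset: "chain\<^sub>\<subseteq> B \<Longrightarrow> A \<subseteq> B \<Longrightarrow> chain\<^sub>\<subseteq> A"
  unfolding chain_subset_def by blast

lemma chain_subset_Union_pairwise:
  assumes "\<And>S T. S \<in> \<S> \<Longrightarrow> T \<in> \<S> \<Longrightarrow> chain\<^sub>\<subseteq> (S \<union> T)"
  shows "chain\<^sub>\<subseteq> (\<Union>\<S>)"
  using assms unfolding chain_subset_def by blast

text \<open>Positive layers are nested, and a layer cut above \<open>s\<close> lies inside every layer cut below
  \<open>s\<close>; so compatible vertex assignments map the active layers to a chain.\<close>

lemma chain_prism_support:
  assumes E: "finite (supp x)"
    and chain: "\<And>c c'. c \<subseteq> c' \<Longrightarrow> c' \<subseteq> supp x \<Longrightarrow> c \<noteq> {} \<Longrightarrow>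
      chain\<^sub>\<subseteq> (supp (F1 c) \<union> supp (F1 c')) \<and> chain\<^sub>\<subseteq> (supp (F2 c) \<union> supp (F2 c')) \<and>
      chain\<^sub>\<subseteq> (supp (F1 c) \<union> supp (F2 c'))"
  shows "chain\<^sub>\<subseteq> (prism_support s F1 F2 x)"
proof -
  define A1 where "A1 = {c \<in> Pow (supp x) - {{}}. 0 < layer_above x (supp x) s c}"
  define A2 where "A2 = {c \<in> Pow (supp x) - {{}}. 0 < layer_below x (supp x) s c}"
  have pos: "c \<subseteq> supp x \<and> c \<noteq> {} \<and> 0 < layer x (supp x) c" if "c \<in> A1 \<union> A2" for c
    using that layer_above_pos_imp_layer_pos layer_below_pos_imp_layer_pos
    by (auto simp: A1_def A2_def)
  have same: "chain\<^sub>\<subseteq> (supp (F c) \<union> supp (F c'))"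
    if "c \<in> A1 \<union> A2" "c' \<in> A1 \<union> A2" and F: "F = F1 \<or> F = F2" for F c c'
  proof -
    have ordered: "chain\<^sub>\<subseteq> (supp (F d) \<union> supp (F d'))" if "d \<subseteq> d'" "d' \<subseteq> supp x" "d \<noteq> {}" for d d'
      using chain [OF that] F by auto
    from pos [OF that(1)] pos [OF that(2)] have "c \<subseteq> c' \<or> c' \<subseteq> c"
      by (meson layers_pos_nested [OF E])
    then show ?thesis
      using ordered pos [OF that(1)] pos [OF that(2)] by (metis sup_commute)
  qed
  have mixed: "chain\<^sub>\<subseteq> (supp (F1 c) \<union> supp (F2 c'))" if "c \<in> A1" "c' \<in> A2" for c c'
  proof -
    have "c \<subseteq> c'"
      using that E
      by (intro layer_above_below_subset [of "supp x" c x s c']) (auto simp: A1_def A2_def)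
    moreover have "c' \<subseteq> supp x" "c \<noteq> {}"
      using that by (auto simp: A1_def A2_def)
    ultimately show ?thesis
      using chain by blast
  qed
  have "chain\<^sub>\<subseteq> (\<Union>((\<lambda>c. supp (F1 c)) ` A1 \<union> (\<lambda>c. supp (F2 c)) ` A2))"
  proof (rule chain_subset_Union_pairwise)
    fix S T assume "S \<in> (\<lambda>c. supp (F1 c)) ` A1 \<union> (\<lambda>c. supp (F2 c)) ` A2"
      and "T \<in> (\<lambda>c. supp (F1 c)) ` A1 \<union> (\<lambda>c. supp (F2 c)) ` A2"
    then show "chain\<^sub>\<subseteq> (S \<union> T)"
      using same [of _ _ F1] same [of _ _ F2] mixed by (auto simp: sup_commute)
  qed
  then show ?thesis
    unfolding prism_support_def A1_def [symmetric] A2_def [symmetric]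
    by (simp add: Union_Un_distrib)
qed

lemma prism_support_mass:
  assumes E: "finite (supp x)" "\<forall>v. 0 \<le> x v"
    and mass: "\<And>c. c \<subseteq> supp x \<Longrightarrow> c \<noteq> {} \<Longrightarrow>
      mass_on P (card c) (F1 c) \<and> mass_on P (card c) (F2 c)"
  shows "finite (prism_support s F1 F2 x)" "prism_support s F1 F2 x \<subseteq> P"
    and "sum (prism_map s F1 F2 x) (prism_support s F1 F2 x) = sum x (supp x)"
proof -
  define D where "D = prism_support s F1 F2 x"
  show "finite (prism_support s F1 F2 x)" "prism_support s F1 F2 x \<subseteq> P"
    using E(1) mass by (auto simp: prism_support_def mass_on_def)
  then have D: "finite D"
    by (simp add: D_def)
  have weighted: "a * (\<Sum>w\<in>D. F c w) = a * card c"
    if "0 \<le> a" "0 < a \<Longrightarrow> supp (F c) \<subseteq> D" "mass_on P (card c) (F c)" for a F c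
    using that sum_mass_on [OF _ D] by (cases "a = 0") auto
  have "sum (prism_map s F1 F2 x) D =
      (\<Sum>c\<in>Pow (supp x) - {{}}. \<Sum>w\<in>D.
        layer_above x (supp x) s c * F1 c w + layer_below x (supp x) s c * F2 c w)"
    unfolding prism_map_def prism_map_on_def by (rule sum.swap)
  also have "\<dots> = (\<Sum>c\<in>Pow (supp x) - {{}}.
      layer_above x (supp x) s c * (\<Sum>w\<in>D. F1 c w) + layer_below x (supp x) s c * (\<Sum>w\<in>D. F2 c w))"
    by (simp add: sum.distrib sum_distrib_left)
  also have "\<dots> = (\<Sum>c\<in>Pow (supp x) - {{}}. layer x (supp x) c * card c)"
  proof (rule sum.cong [OF refl])
    fix c assume c: "c \<in> Pow (supp x) - {{}}"
    have A: "layer_above x (supp x) s c * (\<Sum>w\<in>D. F1 c w) = layer_above x (supp x) s c * card c"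
      by (rule weighted) (use c mass [of c] in \<open>auto simp: D_def prism_support_def\<close>)
    have B: "layer_below x (supp x) s c * (\<Sum>w\<in>D. F2 c w) = layer_below x (supp x) s c * card c"
      by (rule weighted) (use c mass [of c] in \<open>auto simp: D_def prism_support_def\<close>)
    show "layer_above x (supp x) s c * (\<Sum>w\<in>D. F1 c w) + layer_below x (supp x) s c * (\<Sum>w\<in>D. F2 c w)
        = layer x (supp x) c * card c"
      unfolding A B layer_above_add_below [of x "supp x" s c, symmetric]
      by (simp add: distrib_right)
  qed
  also have "\<dots> = sum x (supp x)"
    using E by (rule sum_layers_card) simp
  finally show "sum (prism_map s F1 F2 x) (prism_support s F1 F2 x) = sum x (supp x)"
    by (simp add: D_def)
qed

lemma prism_map_in_realization_nerve:
  assumes x: "finite (supp x)" "\<forall>v. 0 \<le> x v" "sum x (supp x) = 1"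
    and mass: "\<And>c. c \<subseteq> supp x \<Longrightarrow> c \<noteq> {} \<Longrightarrow>
      mass_on P (card c) (F1 c) \<and> mass_on P (card c) (F2 c)"
    and chain: "\<And>c c'. c \<subseteq> c' \<Longrightarrow> c' \<subseteq> supp x \<Longrightarrow> c \<noteq> {} \<Longrightarrow>
      chain\<^sub>\<subseteq> (supp (F1 c) \<union> supp (F1 c')) \<and> chain\<^sub>\<subseteq> (supp (F2 c) \<union> supp (F2 c')) \<and>
      chain\<^sub>\<subseteq> (supp (F1 c) \<union> supp (F2 c'))"
  shows "prism_map s F1 F2 x \<in> realization_carrier (nerve P)"
proof -
  let ?y = "prism_map s F1 F2 x" and ?D = "prism_support s F1 F2 x"
  note D = prism_support_mass [OF x(1,2) mass]
  have "0 \<le> F1 c w \<and> 0 \<le> F2 c w" if "c \<in> Pow (supp x) - {{}}" for c w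
    using mass [of c] that by (auto simp: mass_on_def)
  then have "0 \<le> ?y w" for w
    unfolding prism_map_def prism_map_on_def
    by (intro sum_nonneg add_nonneg_nonneg mult_nonneg_nonneg layer_above_nonneg layer_below_nonneg)
      auto
  then have "?y \<in> closed_simplex ?D"
    using D(3) x(3) supp_prism_map_subset [of s F1 F2 x] by (auto simp: mem_closed_simplex_iff)
  moreover have "?D \<noteq> {}"
  proof
    assume "?D = {}"
    then have "sum ?y ?D = 0"
      by simp
    with D(3) x(3) show False
      by simp
  qed
  then have "?D \<in> nerve P"
    using D(1,2) chain_prism_support [where s = s, OF x(1) chain] by (simp add: mem_nerve_iff)
  ultimately show ?thesis
    unfolding realization_carrier_def by blast
qed

lemma continuous_map_Min:
  assumes "finite I" "I \<noteq> {}" "\<And>i. i \<in> I \<Longrightarrow> continuous_map Z euclideanreal (g i)"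
  shows "continuous_map Z euclideanreal (\<lambda>z. Min ((\<lambda>i. g i z) ` I))"
  using assms
proof (induction I rule: finite_ne_induct)
  case (insert a I)
  then have "(\<lambda>z. Min ((\<lambda>i. g i z) ` insert a I)) = (\<lambda>z. min (g a z) (Min ((\<lambda>i. g i z) ` I)))"
    by (simp add: Min_insert)
  with insert show ?case
    by (simp add: continuous_map_real_min)
qed simp

lemma continuous_map_Max_insert:
  assumes "continuous_map Z euclideanreal f" "finite I"
    and "\<And>i. i \<in> I \<Longrightarrow> continuous_map Z euclideanreal (g i)"
  shows "continuous_map Z euclideanreal (\<lambda>z. Max (insert (f z) ((\<lambda>i. g i z) ` I)))"
  using assms(2,3)
proof (induction I rule: finite_induct)
  case (insert a I)
  have "insert (f z) ((\<lambda>i. g i z) ` insert a I) =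
      insert (g a z) (insert (f z) ((\<lambda>i. g i z) ` I))" for z
    by auto
  then have "(\<lambda>z. Max (insert (f z) ((\<lambda>i. g i z) ` insert a I))) =
      (\<lambda>z. max (g a z) (Max (insert (f z) ((\<lambda>i. g i z) ` I))))"
    using insert(1) by simp
  with insert show ?case
    by (simp add: continuous_map_real_max)
qed (simp add: assms(1))

lemma continuous_map_prism_map_on:
  assumes \<pi>: "continuous_map Z (powertop_real UNIV) \<pi>"
    and \<tau>: "continuous_map Z euclideanreal \<tau>" and E: "finite E"
  shows "continuous_map Z (powertop_real UNIV) (\<lambda>z. prism_map_on E (\<tau> z) F1 F2 (\<pi> z))"
proof -
  have coord: "continuous_map Z euclideanreal (\<lambda>z. \<pi> z v)" for v
    using \<pi> unfolding continuous_map_componentwise_UNIV by blast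
  have "continuous_map Z euclideanreal (\<lambda>z. layer_above (\<pi> z) E (\<tau> z) c)"
    "continuous_map Z euclideanreal (\<lambda>z. layer_below (\<pi> z) E (\<tau> z) c)" if "c \<in> Pow E - {{}}" for c
  proof -
    have "continuous_map Z euclideanreal (\<lambda>z. Min ((\<lambda>v. \<pi> z v) ` c))"
      using that E finite_subset by (intro continuous_map_Min coord) auto
    moreover have "continuous_map Z euclideanreal (\<lambda>z. level_outside (\<pi> z) E c)"
      unfolding level_outside_def using E by (intro continuous_map_Max_insert coord) auto
    ultimately show "continuous_map Z euclideanreal (\<lambda>z. layer_above (\<pi> z) E (\<tau> z) c)"
      "continuous_map Z euclideanreal (\<lambda>z. layer_below (\<pi> z) E (\<tau> z) c)"
      unfolding layer_above_def layer_below_def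
      by (intro continuous_map_real_max continuous_map_real_min continuous_map_diff \<tau>
          continuous_map_const; simp)+
  qed
  then show ?thesis
    unfolding continuous_map_componentwise_UNIV prism_map_on_def using E
    by (intro allI continuous_map_sum continuous_map_add continuous_map_real_mult
        continuous_map_const) auto
qed

lemma continuous_map_prism_map:
  assumes Z: "compact_space Z" and L: "simplicial_complex L" and L': "simplicial_complex L'"
    and \<pi>: "continuous_map Z (realization L) \<pi>" and \<tau>: "continuous_map Z euclideanreal \<tau>"
    and fin: "\<And>c. finite c \<Longrightarrow> finite (supp (F1 c)) \<and> finite (supp (F2 c))"
    and into: "\<And>z. z \<in> topspace Z \<Longrightarrow> prism_map (\<tau> z) F1 F2 (\<pi> z) \<in> realization_carrier L'"
  shows "continuous_map Z (realization L') (\<lambda>z. prism_map (\<tau> z) F1 F2 (\<pi> z))"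
proof -
  have "compactin (realization L) (\<pi> ` topspace Z)"
    using image_compactin [OF Z [unfolded compact_space_def] \<pi>] .
  then obtain E where E: "finite E" "\<And>z. z \<in> topspace Z \<Longrightarrow> supp (\<pi> z) \<subseteq> E"
    using compactin_realization_finite_supp [OF L] by (metis imageI)
  have "continuous_map Z (powertop_real UNIV) \<pi>"
    using continuous_map_compose [OF \<pi> continuous_map_realization_powertop] by simp
  then have "continuous_map Z (powertop_real UNIV) (\<lambda>z. prism_map_on E (\<tau> z) F1 F2 (\<pi> z))"
    by (rule continuous_map_prism_map_on [OF _ \<tau> E(1)])
  then have cont: "continuous_map Z (powertop_real UNIV) (\<lambda>z. prism_map (\<tau> z) F1 F2 (\<pi> z))"
  proof (rule continuous_map_eq)
    fix z assume "z \<in> topspace Z"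
    then show "prism_map_on E (\<tau> z) F1 F2 (\<pi> z) = prism_map (\<tau> z) F1 F2 (\<pi> z)"
      using E by (intro prism_map_on_eq_prism_map) auto
  qed
  define E' where "E' = (\<Union>c\<in>Pow E. supp (F1 c) \<union> supp (F2 c))"
  have "finite E'"
    unfolding E'_def using E(1) fin finite_subset by (intro finite_UN_I) auto
  moreover have "supp (prism_map (\<tau> z) F1 F2 (\<pi> z)) \<subseteq> E'" if "z \<in> topspace Z" for z
  proof -
    have "prism_support (\<tau> z) F1 F2 (\<pi> z) \<subseteq> (\<Union>c\<in>Pow (supp (\<pi> z)). supp (F1 c) \<union> supp (F2 c))"
      by (auto simp: prism_support_def)
    also have "\<dots> \<subseteq> E'"
      unfolding E'_def using E(2) [OF that] by (intro UN_mono) auto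
    finally show ?thesis
      using supp_prism_map_subset [of "\<tau> z" F1 F2 "\<pi> z"] by (rule subset_trans [rotated])
  qed
  ultimately show ?thesis
    using into by (intro continuous_map_into_realization [OF L' cont]) auto
qed

section \<open>A criterion for weak homotopy equivalences\<close>

lemma compact_space_nsphere: "compact_space (nsphere n)"
proof -
  define S where "S = {x::nat \<Rightarrow> real. (\<Sum>i\<le>n. x i ^ 2) = 1 \<and> (\<forall>i>n. x i = 0)}"
  define B where "B i = (if i \<le> n then {-1..1::real} else {0})" for i
  have box: "compactin (powertop_real UNIV) (PiE UNIV B)"
    unfolding compactin_PiE by (auto simp: B_def)
  have "S \<subseteq> PiE UNIV B"
  proof
    fix x assume x: "x \<in> S"
    have "x i \<in> B i" for i
    proof (cases "i \<le> n")
      case True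
      have "x i ^ 2 \<le> (\<Sum>j\<le>n. x j ^ 2)"
        using True by (intro member_le_sum) auto
      then have "\<bar>x i\<bar> \<le> 1"
        using x by (simp add: S_def abs_square_le_1)
      then show ?thesis
        using True by (simp add: B_def abs_le_iff)
    qed (use x in \<open>simp add: B_def S_def\<close>)
    then show "x \<in> PiE UNIV B"
      by auto
  qed
  moreover have "closedin (powertop_real UNIV) S"
  proof -
    have coord: "closedin (powertop_real UNIV) {x \<in> topspace (powertop_real UNIV). x i \<in> {0::real}}"
      for i
      by (rule closedin_continuous_map_preimage [OF continuous_map_product_projection]) auto
    have "continuous_map (powertop_real UNIV) euclideanreal (\<lambda>x::nat \<Rightarrow> real. \<Sum>i\<le>n. x i ^ 2)"
      by (intro continuous_map_sum continuous_map_real_pow)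
        (auto intro: continuous_map_product_projection)
    then have "closedin (powertop_real UNIV)
        {x \<in> topspace (powertop_real UNIV). (\<Sum>i\<le>n. x i ^ 2) \<in> {1::real}}"
      by (rule closedin_continuous_map_preimage) auto
    moreover have "S = {x \<in> topspace (powertop_real UNIV). (\<Sum>i\<le>n. x i ^ 2) \<in> {1}} \<inter>
        (\<Inter>i\<in>{n<..}. {x \<in> topspace (powertop_real UNIV). x i \<in> {0}})"
      by (auto simp: S_def)
    ultimately show ?thesis
      using coord by (auto intro!: closedin_Int closedin_INT)
  qed
  ultimately have "compactin (powertop_real UNIV) S"
    by (rule closed_compactin [OF box])
  then show ?thesis
    unfolding nsphere S_def [symmetric] by (rule compact_space_subtopology)
qed

lemma sphere_base_in_topspace: "sphere_base \<in> topspace (nsphere n)"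
  unfolding sphere_base_def by (rule in_topspace_nsphere)

lemma compact_space_cylinder:
  "compact_space Z \<Longrightarrow> compact_space (prod_topology (top_of_set {0..1::real}) Z)"
  by (simp add: compact_space_prod_topology compact_space_subtopology compactin_euclidean_iff)

lemma homotopic_with_retraction:
  fixes Z :: "'z topology" and X :: "'x topology"
  assumes r_f: "\<And>x. x \<in> topspace X \<Longrightarrow> r (f x) = x"
    and r: "\<And>H. continuous_map (prod_topology (top_of_set {0..1::real}) Z) Y H \<Longrightarrow>
      continuous_map (prod_topology (top_of_set {0..1::real}) Z) X (r \<circ> H)"
    and h: "continuous_map Z X h1" "continuous_map Z X h2"
    and a: "a \<in> topspace Z" and x: "x \<in> topspace X"
    and hom: "homotopic_with (\<lambda>k. k a = f x) Z Y (f \<circ> h1) (f \<circ> h2)"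
  shows "homotopic_with (\<lambda>k. k a = x) Z X h1 h2"
proof (rule homotopic_with [THEN iffD2])
  obtain H where H: "continuous_map (prod_topology (top_of_set {0..1::real}) Z) Y H"
    "\<forall>z. H (0, z) = f (h1 z)" "\<forall>z. H (1, z) = f (h2 z)" "\<forall>t\<in>{0..1}. H (t, a) = f x"
    using hom unfolding homotopic_with_def by auto
  show "(k a = x) = (k' a = x)" if "\<And>z. z \<in> topspace Z \<Longrightarrow> k z = k' z" for k k' :: "'z \<Rightarrow> 'x"
    using that a by metis
  have "h1 z \<in> topspace X" "h2 z \<in> topspace X" if "z \<in> topspace Z" for z
    using continuous_map_image_subset_topspace h that by blast+
  then have "(r \<circ> H) (0, z) = h1 z" "(r \<circ> H) (1, z) = h2 z" if "z \<in> topspace Z" for z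
    using that H(2,3) r_f by simp_all
  moreover have "(r \<circ> H) (t, a) = x" if "t \<in> {0..1::real}" for t
    using that H(4) r_f [OF x] by simp
  ultimately show "\<exists>H. continuous_map (prod_topology (top_of_set {0..1::real}) Z) X H \<and>
      (\<forall>z\<in>topspace Z. H (0, z) = h1 z) \<and> (\<forall>z\<in>topspace Z. H (1, z) = h2 z) \<and>
      (\<forall>t\<in>{0..1}. H (t, a) = x)"
    using r [OF H(1)] by blast
qed

lemma weak_homotopy_equivalenceI_retraction:
  assumes f: "continuous_map X Y f" and r_f: "\<And>x. x \<in> topspace X \<Longrightarrow> r (f x) = x"
    and r_sphere: "\<And>n g. continuous_map (nsphere n) Y g \<Longrightarrow> continuous_map (nsphere n) X (r \<circ> g)"
    and r_cylinder: "\<And>n H.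
      continuous_map (prod_topology (top_of_set {0..1::real}) (nsphere n)) Y H \<Longrightarrow>
      continuous_map (prod_topology (top_of_set {0..1::real}) (nsphere n)) X (r \<circ> H)"
    and deform: "\<And>n g. continuous_map (nsphere n) Y g \<Longrightarrow>
      homotopic_with (\<lambda>k. \<forall>z\<in>topspace (nsphere n). g z \<in> f ` topspace X \<longrightarrow> k z = g z)
        (nsphere n) Y g (f \<circ> (r \<circ> g))"
  shows "weak_homotopy_equivalence X Y f"
  unfolding weak_homotopy_equivalence_def
proof (intro conjI f allI ballI impI; elim conjE)
  fix n x g assume x: "x \<in> topspace X" and g: "continuous_map (nsphere n) Y g" "g sphere_base = f x"
  have "homotopic_with (\<lambda>k. k sphere_base = f x) (nsphere n) Y g (f \<circ> (r \<circ> g))"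
    using deform [OF g(1)]
    by (rule homotopic_with_mono) (use g(2) x sphere_base_in_topspace in auto)
  then show "\<exists>h. continuous_map (nsphere n) X h \<and> h sphere_base = x \<and>
      homotopic_with (\<lambda>k. k sphere_base = f x) (nsphere n) Y (f \<circ> h) g"
    using r_sphere [OF g(1)] g(2) r_f [OF x] by (metis comp_apply homotopic_with_sym)
next
  fix n x h1 h2
  assume "x \<in> topspace X" "continuous_map (nsphere n) X h1" "continuous_map (nsphere n) X h2"
    "homotopic_with (\<lambda>k. k sphere_base = f x) (nsphere n) Y (f \<circ> h1) (f \<circ> h2)"
  then show "homotopic_with (\<lambda>k. k sphere_base = x) (nsphere n) X h1 h2"
    using homotopic_with_retraction [OF r_f r_cylinder] sphere_base_in_topspace by blast
qed

section \<open>Retracting the nerve of a poset onto a subposet\<close>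

lemma Union_mem_nerve: "c \<in> nerve P \<Longrightarrow> \<Union>c \<in> c"
  using Union_in_chain [of c UNIV] by (simp add: mem_nerve_iff chain_subset_alt_def)

lemma subset_supp_mem_nerve:
  assumes "x \<in> realization_carrier (nerve P)" "c \<subseteq> supp x" "c \<noteq> {}"
  shows "c \<in> nerve P"
proof -
  have "supp x \<in> nerve P"
    using assms(1) by (simp add: mem_realization_carrier_iff [OF simplicial_complex_nerve])
  then show ?thesis
    by (rule simplicial_complexD(3) [OF simplicial_complex_nerve _ assms(2,3)])
qed

lemma chain_supp_realization_nerve: "x \<in> realization_carrier (nerve P) \<Longrightarrow> chain\<^sub>\<subseteq> (supp x)"
  by (simp add: mem_realization_carrier_iff [OF simplicial_complex_nerve] mem_nerve_iff)

definition vertex_map :: "'a set set \<Rightarrow> ('a set set \<Rightarrow> 'a set) \<Rightarrow> 'a set set \<Rightarrow> 'a set \<Rightarrow> real" where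
  "vertex_map Q G c = (if c \<subseteq> Q then indicator c else (\<lambda>w. if w = G c then real (card c) else 0))"

lemma supp_vertex_map:
  "finite c \<Longrightarrow> c \<noteq> {} \<Longrightarrow> supp (vertex_map Q G c) = (if c \<subseteq> Q then c else {G c})"
  by (auto simp: vertex_map_def supp_def indicator_def)

lemma mass_on_vertex_map:
  assumes "finite c" "c \<noteq> {}" "supp (vertex_map Q G c) \<subseteq> P"
  shows "mass_on P (card c) (vertex_map Q G c)"
  using assms by (auto simp: mass_on_def supp_vertex_map) (auto simp: vertex_map_def)

lemma vertex_map_eq_indicator: "c \<subseteq> Q \<Longrightarrow> vertex_map Q G c = indicator c"
  by (simp add: vertex_map_def)

lemma mass_on_indicator: "finite c \<Longrightarrow> c \<subseteq> P \<Longrightarrow> mass_on P (card c) (indicator c)"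
  by (simp add: mass_on_def)

lemma continuous_map_prism_homotopy:
  assumes Z: "compact_space Z" and g: "continuous_map Z (realization (nerve P)) g"
    and fin: "\<And>c. finite c \<Longrightarrow> finite (supp (F1 c)) \<and> finite (supp (F2 c))"
    and into: "\<And>s x. x \<in> realization_carrier (nerve P) \<Longrightarrow>
      prism_map s F1 F2 x \<in> realization_carrier (nerve P)"
  shows "continuous_map (prod_topology (top_of_set {0..1::real}) Z) (realization (nerve P))
    (\<lambda>(t, z). prism_map (1 - t) F1 F2 (g z))"
proof -
  let ?I = "top_of_set {0..1::real}"
  have "continuous_map (prod_topology ?I Z) (realization (nerve P))
      (\<lambda>p. prism_map (1 - fst p) F1 F2 (g (snd p)))"
  proof (rule continuous_map_prism_map [OF _ simplicial_complex_nerve simplicial_complex_nerve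
        _ _ fin])
    show "compact_space (prod_topology ?I Z)"
      using Z by (rule compact_space_cylinder)
    show "continuous_map (prod_topology ?I Z) (realization (nerve P)) (\<lambda>p. g (snd p))"
      using continuous_map_compose [OF continuous_map_snd g] by (simp add: o_def)
    show "continuous_map (prod_topology ?I Z) euclideanreal (\<lambda>p. 1 - fst p)"
      by (intro continuous_map_diff continuous_map_const [THEN iffD2]
          continuous_map_into_fulltopology [OF continuous_map_fst]) simp
  qed (use into continuous_map_realization_carrier [OF g] in auto)
  then show ?thesis
    by (simp add: case_prod_beta')
qed

lemma homotopic_subdivision_maps:
  assumes Z: "compact_space Z" and g: "continuous_map Z (realization (nerve P)) g"
    and fin: "\<And>c. finite c \<Longrightarrow> finite (supp (F1 c)) \<and> finite (supp (F2 c))"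
    and into: "\<And>s x. x \<in> realization_carrier (nerve P) \<Longrightarrow>
      prism_map s F1 F2 x \<in> realization_carrier (nerve P)"
    and fixed: "\<And>s x. x \<in> realization_carrier (nerve Q) \<Longrightarrow> prism_map s F1 F2 x = x"
  shows "homotopic_with (\<lambda>k. \<forall>z\<in>topspace Z. g z \<in> realization_carrier (nerve Q) \<longrightarrow> k z = g z)
    Z (realization (nerve P)) (\<lambda>z. subdivision_map F2 (g z)) (\<lambda>z. subdivision_map F1 (g z))"
proof (rule homotopic_with [THEN iffD2])
  show "(\<forall>z\<in>topspace Z. g z \<in> realization_carrier (nerve Q) \<longrightarrow> k z = g z) =
        (\<forall>z\<in>topspace Z. g z \<in> realization_carrier (nerve Q) \<longrightarrow> k' z = g z)"
    if "\<And>z. z \<in> topspace Z \<Longrightarrow> k z = k' z" for k k'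
    using that by auto
  have "prism_map 1 F1 F2 (g z) = subdivision_map F2 (g z)"
    "prism_map 0 F1 F2 (g z) = subdivision_map F1 (g z)" if "z \<in> topspace Z" for z
  proof -
    note gz = continuous_map_realization_carrier [OF g that]
    have "finite (supp (g z))"
      by (rule finite_supp_realization [OF simplicial_complex_nerve gz])
    moreover have "\<forall>v. g z v \<le> 1"
      using realization_le_1 [OF simplicial_complex_nerve gz] by blast
    ultimately show "prism_map 1 F1 F2 (g z) = subdivision_map F2 (g z)"
      "prism_map 0 F1 F2 (g z) = subdivision_map F1 (g z)"
      by (simp_all add: prism_map_0 prism_map_1)
  qed
  moreover have "continuous_map (prod_topology (top_of_set {0..1::real}) Z) (realization (nerve P))
      (\<lambda>(t, z). prism_map (1 - t) F1 F2 (g z))"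
    using Z g fin into by (rule continuous_map_prism_homotopy)
  ultimately show "\<exists>H.
      continuous_map (prod_topology (top_of_set {0..1::real}) Z) (realization (nerve P)) H \<and>
      (\<forall>z\<in>topspace Z. H (0, z) = subdivision_map F2 (g z)) \<and>
      (\<forall>z\<in>topspace Z. H (1, z) = subdivision_map F1 (g z)) \<and>
      (\<forall>t\<in>{0..1}. \<forall>z\<in>topspace Z. g z \<in> realization_carrier (nerve Q) \<longrightarrow> H (t, z) = g z)"
    using fixed
    by (intro exI [of _ "\<lambda>(t, z). prism_map (1 - t) F1 F2 (g z)"]) auto
qed

text \<open>Sending each chain \<open>c\<close> of \<open>P\<close> that leaves \<open>Q\<close> to the vertex \<open>G c\<close>, and every chain inside
  \<open>Q\<close> to its barycentre, defines a map on the barycentric subdivision of the nerve of \<open>P\<close> that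
  retracts it onto the nerve of \<open>Q\<close>; the assumptions on \<open>G\<close> keep images of nested chains
  comparable.\<close>

locale nerve_retraction =
  fixes P Q :: "'a set set" and G :: "'a set set \<Rightarrow> 'a set"
  assumes Q_subset_P: "Q \<subseteq> P"
    and G_mem: "\<And>c. c \<in> nerve P \<Longrightarrow> \<not> c \<subseteq> Q \<Longrightarrow> G c \<in> Q"
    and G_subset_Union: "\<And>c. c \<in> nerve P \<Longrightarrow> \<not> c \<subseteq> Q \<Longrightarrow> G c \<subseteq> \<Union>c"
    and subset_G: "\<And>c q. c \<in> nerve P \<Longrightarrow> \<not> c \<subseteq> Q \<Longrightarrow> q \<in> c \<Longrightarrow> q \<in> Q \<Longrightarrow> q \<subseteq> G c"
    and G_mono: "\<And>c c'. c' \<in> nerve P \<Longrightarrow> c \<subseteq> c' \<Longrightarrow> c \<noteq> {} \<Longrightarrow> \<not> c \<subseteq> Q \<Longrightarrow> G c \<subseteq> G c'"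
begin

definition retraction :: "('a set \<Rightarrow> real) \<Rightarrow> 'a set \<Rightarrow> real" where
  "retraction = subdivision_map (vertex_map Q G)"

lemma supp_vertex_map_subset_Q: "c \<in> nerve P \<Longrightarrow> supp (vertex_map Q G c) \<subseteq> Q"
  using G_mem by (auto simp: mem_nerve_iff supp_vertex_map)

lemma supp_top_vertex_map_subset: "c \<in> nerve P \<Longrightarrow> supp (vertex_map Q Union c) \<subseteq> c"
  using Union_mem_nerve by (auto simp: mem_nerve_iff supp_vertex_map)

lemma chain_vertex_maps:
  assumes x: "x \<in> realization_carrier (nerve P)" and c: "c \<subseteq> c'" "c' \<subseteq> supp x" "c \<noteq> {}"
  shows "chain\<^sub>\<subseteq> (supp (vertex_map Q G c) \<union> supp (vertex_map Q G c'))"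
proof -
  have nerve: "c \<in> nerve P" "c' \<in> nerve P"
    using subset_supp_mem_nerve [OF x] c by blast+
  then have fin: "finite c" "finite c'" "c' \<noteq> {}"
    using c by (auto simp: mem_nerve_iff)
  have chain: "chain\<^sub>\<subseteq> A" if "A \<subseteq> supp x" for A
    using chain_subset_subset [OF chain_supp_realization_nerve [OF x] that] .
  show ?thesis
  proof (cases "c' \<subseteq> Q")
    case True
    then show ?thesis
      using c fin by (intro chain) (auto simp: supp_vertex_map)
  next
    case c'_out: False
    show ?thesis
    proof (cases "c \<subseteq> Q")
      case True
      then have "q \<subseteq> G c'" if "q \<in> c" for q
        using that c subset_G [OF nerve(2) c'_out] by blast
      moreover have "chain\<^sub>\<subseteq> c"
        using c by (intro chain) auto
      ultimately show ?thesis
        using True c'_out c fin by (auto simp: supp_vertex_map chain_subset_def)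
    next
      case False
      then show ?thesis
        using c'_out c fin G_mono [OF nerve(2) c(1,3)]
        by (auto simp: supp_vertex_map chain_subset_def)
    qed
  qed
qed

lemma chain_vertex_map_top_vertex_map:
  assumes x: "x \<in> realization_carrier (nerve P)" and c: "c \<subseteq> c'" "c' \<subseteq> supp x" "c \<noteq> {}"
  shows "chain\<^sub>\<subseteq> (supp (vertex_map Q G c) \<union> supp (vertex_map Q Union c'))"
proof -
  have nerve: "c \<in> nerve P" "c' \<in> nerve P"
    using subset_supp_mem_nerve [OF x] c by blast+
  then have fin: "finite c" "finite c'" "c' \<noteq> {}"
    using c by (auto simp: mem_nerve_iff)
  show ?thesis
  proof (cases "c \<subseteq> Q")
    case True
    then have "supp (vertex_map Q G c) = c"
      using c fin by (simp add: supp_vertex_map)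
    then show ?thesis
      using c supp_top_vertex_map_subset [OF nerve(2)]
      by (intro chain_subset_subset [OF chain_supp_realization_nerve [OF x]]) auto
  next
    case False
    then have "\<not> c' \<subseteq> Q"
      using c by blast
    moreover have "G c \<subseteq> \<Union>c'"
      using G_subset_Union [OF nerve(1) False] c by blast
    ultimately show ?thesis
      using False c fin by (auto simp: supp_vertex_map chain_subset_def)
  qed
qed

lemma prism_map_in_realization:
  assumes x: "x \<in> realization_carrier (nerve P)"
    and mass: "\<And>c. c \<in> nerve P \<Longrightarrow> mass_on P' (card c) (F1 c) \<and> mass_on P' (card c) (F2 c)"
    and chain: "\<And>c c'. c \<subseteq> c' \<Longrightarrow> c' \<subseteq> supp x \<Longrightarrow> c \<noteq> {} \<Longrightarrow>
      chain\<^sub>\<subseteq> (supp (F1 c) \<union> supp (F1 c')) \<and> chain\<^sub>\<subseteq> (supp (F2 c) \<union> supp (F2 c')) \<and>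
      chain\<^sub>\<subseteq> (supp (F1 c) \<union> supp (F2 c'))"
  shows "prism_map s F1 F2 x \<in> realization_carrier (nerve P')"
proof -
  have x': "finite (supp x)" "\<forall>v. 0 \<le> x v" "sum x (supp x) = 1"
    using x finite_supp_realization [OF simplicial_complex_nerve x]
    by (simp_all add: mem_realization_carrier_iff [OF simplicial_complex_nerve])
  have "mass_on P' (card c) (F1 c) \<and> mass_on P' (card c) (F2 c)" if "c \<subseteq> supp x" "c \<noteq> {}" for c
    using mass subset_supp_mem_nerve [OF x that] by blast
  then show ?thesis
    by (rule prism_map_in_realization_nerve [of x P' F1 F2 s, OF x' _ chain])
qed

lemma chain_supp_subsets:
  assumes "x \<in> realization_carrier (nerve P)" "supp (F c) \<subseteq> c" "supp (F' c') \<subseteq> c'"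
    and "c \<subseteq> c'" "c' \<subseteq> supp x"
  shows "chain\<^sub>\<subseteq> (supp (F c) \<union> supp (F' c'))"
  by (rule chain_subset_subset [OF chain_supp_realization_nerve [OF assms(1)]]) (use assms in blast)

lemma prism_map_retraction_in_realization:
  "x \<in> realization_carrier (nerve P) \<Longrightarrow>
     prism_map s (vertex_map Q G) (vertex_map Q G) x \<in> realization_carrier (nerve Q)"
  by (rule prism_map_in_realization)
    (auto intro!: mass_on_vertex_map supp_vertex_map_subset_Q chain_vertex_maps simp: mem_nerve_iff)

lemma prism_map_top_in_realization:
  assumes x: "x \<in> realization_carrier (nerve P)"
  shows "prism_map s (vertex_map Q Union) indicator x \<in> realization_carrier (nerve P)"
proof (rule prism_map_in_realization [OF x])
  fix c assume c: "c \<in> nerve P"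
  then have "finite c" "c \<noteq> {}" "c \<subseteq> P"
    by (auto simp: mem_nerve_iff)
  then show "mass_on P (card c) (vertex_map Q Union c) \<and> mass_on P (card c) (indicator c)"
    using supp_top_vertex_map_subset [OF c]
    by (intro conjI mass_on_vertex_map mass_on_indicator) auto
next
  fix c c' assume c: "c \<subseteq> c'" "c' \<subseteq> supp x" "c \<noteq> {}"
  then have top: "supp (vertex_map Q Union c) \<subseteq> c" "supp (vertex_map Q Union c') \<subseteq> c'"
    using subset_supp_mem_nerve [OF x] supp_top_vertex_map_subset by blast+
  have "supp (indicator c :: _ \<Rightarrow> real) \<subseteq> c" "supp (indicator c' :: _ \<Rightarrow> real) \<subseteq> c'"
    by simp_all
  with top show "chain\<^sub>\<subseteq> (supp (vertex_map Q Union c) \<union> supp (vertex_map Q Union c')) \<and>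
      chain\<^sub>\<subseteq> (supp (indicator c :: _ \<Rightarrow> real) \<union> supp (indicator c' :: _ \<Rightarrow> real)) \<and>
      chain\<^sub>\<subseteq> (supp (vertex_map Q Union c) \<union> supp (indicator c' :: _ \<Rightarrow> real))"
    using chain_supp_subsets [OF x _ _ c(1,2)] by blast
qed

lemma prism_map_retraction_top_in_realization:
  assumes x: "x \<in> realization_carrier (nerve P)"
  shows "prism_map s (vertex_map Q G) (vertex_map Q Union) x \<in> realization_carrier (nerve P)"
proof (rule prism_map_in_realization [OF x])
  fix c assume c: "c \<in> nerve P"
  then have "finite c" "c \<noteq> {}" "c \<subseteq> P"
    by (auto simp: mem_nerve_iff)
  then show "mass_on P (card c) (vertex_map Q G c) \<and> mass_on P (card c) (vertex_map Q Union c)"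
    using supp_vertex_map_subset_Q [OF c] supp_top_vertex_map_subset [OF c] Q_subset_P
    by (intro conjI mass_on_vertex_map) auto
next
  fix c c' assume c: "c \<subseteq> c'" "c' \<subseteq> supp x" "c \<noteq> {}"
  then have "supp (vertex_map Q Union c) \<subseteq> c" "supp (vertex_map Q Union c') \<subseteq> c'"
    using subset_supp_mem_nerve [OF x] supp_top_vertex_map_subset by blast+
  then show "chain\<^sub>\<subseteq> (supp (vertex_map Q G c) \<union> supp (vertex_map Q G c')) \<and>
      chain\<^sub>\<subseteq> (supp (vertex_map Q Union c) \<union> supp (vertex_map Q Union c')) \<and>
      chain\<^sub>\<subseteq> (supp (vertex_map Q G c) \<union> supp (vertex_map Q Union c'))"
    using chain_vertex_maps [OF x c] chain_vertex_map_top_vertex_map [OF x c]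
      chain_supp_subsets [OF x _ _ c(1,2)] by blast
qed

lemma prism_map_eq_self_on_Q:
  assumes x: "x \<in> realization_carrier (nerve Q)"
    and F: "\<And>c. c \<subseteq> Q \<Longrightarrow> F1 c = indicator c \<and> F2 c = indicator c"
  shows "prism_map s F1 F2 x = x"
proof (rule prism_map_eq_self)
  have "supp x \<in> nerve Q"
    using x by (simp add: mem_realization_carrier_iff [OF simplicial_complex_nerve])
  then show "F1 c = indicator c \<and> F2 c = indicator c" if "c \<subseteq> supp x" "c \<noteq> {}" for c
    using that F by (auto simp: mem_nerve_iff)
qed (use x finite_supp_realization [OF simplicial_complex_nerve x] in
      \<open>simp_all add: mem_realization_carrier_iff [OF simplicial_complex_nerve]\<close>)

lemma finite_supp_vertex_map: "finite c \<Longrightarrow> finite (supp (vertex_map Q F c))"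
  by (cases "c = {}") (simp_all add: supp_vertex_map vertex_map_eq_indicator)

lemma retraction_eq_self:
  assumes x: "x \<in> realization_carrier (nerve Q)"
  shows "retraction x = x"
proof -
  have "retraction x = prism_map 0 (vertex_map Q G) (vertex_map Q G) x"
    using finite_supp_realization [OF simplicial_complex_nerve x]
    by (simp add: retraction_def prism_map_0)
  also have "\<dots> = x"
    by (rule prism_map_eq_self_on_Q [OF x]) (simp add: vertex_map_eq_indicator)
  finally show ?thesis .
qed

lemma continuous_map_retraction:
  assumes Z: "compact_space Z" and g: "continuous_map Z (realization (nerve P)) g"
  shows "continuous_map Z (realization (nerve Q)) (retraction \<circ> g)"
proof -
  note g_in = continuous_map_realization_carrier [OF g]
  have "continuous_map Z (realization (nerve Q))
      (\<lambda>z. prism_map 0 (vertex_map Q G) (vertex_map Q G) (g z))"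
    by (rule continuous_map_prism_map [OF Z simplicial_complex_nerve simplicial_complex_nerve g])
      (simp_all add: finite_supp_vertex_map prism_map_retraction_in_realization g_in)
  then show ?thesis
  proof (rule continuous_map_eq)
    fix z assume "z \<in> topspace Z"
    then show "prism_map 0 (vertex_map Q G) (vertex_map Q G) (g z) = (retraction \<circ> g) z"
      using finite_supp_realization [OF simplicial_complex_nerve g_in]
      by (simp add: retraction_def prism_map_0)
  qed
qed

text \<open>The straight prism from the identity to the retraction need not stay inside the nerve;
  passing through the map sending each chain outside \<open>Q\<close> to its top element keeps every
  intermediate point supported on a chain.\<close>

lemma retraction_deformation:
  assumes Z: "compact_space Z" and g: "continuous_map Z (realization (nerve P)) g"
  shows "homotopic_with (\<lambda>k. \<forall>z\<in>topspace Z. g z \<in> realization_carrier (nerve Q) \<longrightarrow> k z = g z)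
    Z (realization (nerve P)) g (retraction \<circ> g)"
proof -
  have fixed: "prism_map s F1 F2 x = x" if "x \<in> realization_carrier (nerve Q)"
    and "F1 = indicator \<or> F1 = vertex_map Q G \<or> F1 = vertex_map Q Union"
    and "F2 = indicator \<or> F2 = vertex_map Q G \<or> F2 = vertex_map Q Union" for s F1 F2 x
    using that by (intro prism_map_eq_self_on_Q) (auto simp: vertex_map_eq_indicator)
  have "homotopic_with (\<lambda>k. \<forall>z\<in>topspace Z. g z \<in> realization_carrier (nerve Q) \<longrightarrow> k z = g z)
      Z (realization (nerve P)) (\<lambda>z. subdivision_map indicator (g z))
      (\<lambda>z. subdivision_map (vertex_map Q Union) (g z))"
    (is "homotopic_with ?fixQ _ _ _ _")
    by (rule homotopic_subdivision_maps [OF Z g])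
      (simp_all add: finite_supp_vertex_map prism_map_top_in_realization fixed)
  moreover have "homotopic_with ?fixQ Z (realization (nerve P))
      (\<lambda>z. subdivision_map (vertex_map Q Union) (g z)) (retraction \<circ> g)"
    unfolding retraction_def o_def
    by (rule homotopic_subdivision_maps [OF Z g])
      (simp_all add: finite_supp_vertex_map prism_map_retraction_top_in_realization fixed)
  ultimately have "homotopic_with ?fixQ Z (realization (nerve P))
      (\<lambda>z. subdivision_map indicator (g z)) (retraction \<circ> g)"
    by (rule homotopic_with_trans)
  then show ?thesis
  proof (rule homotopic_with_eq)
    fix z assume "z \<in> topspace Z"
    then have gz: "g z \<in> realization_carrier (nerve P)"
      by (rule continuous_map_realization_carrier [OF g])
    have "subdivision_map indicator (g z) = g z"
      using finite_supp_realization [OF simplicial_complex_nerve gz] gz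
      by (intro subdivision_map_indicator)
        (simp_all add: mem_realization_carrier_iff [OF simplicial_complex_nerve])
    then show "g z = subdivision_map indicator (g z)"
      by simp
  qed auto
qed

theorem poset_inclusion_weak_equivalence: "poset_inclusion_weak_equivalence Q P"
  unfolding poset_inclusion_weak_equivalence_def
proof (intro conjI Q_subset_P weak_homotopy_equivalenceI_retraction)
  show "continuous_map (realization (nerve Q)) (realization (nerve P)) id"
    by (rule continuous_map_realization_subcomplex [OF nerve_mono [OF Q_subset_P]])
  show "retraction (id x) = x" if "x \<in> topspace (realization (nerve Q))" for x
    using that retraction_eq_self by (simp add: topspace_realization)
  show "continuous_map (nsphere n) (realization (nerve Q)) (retraction \<circ> g)"
    if "continuous_map (nsphere n) (realization (nerve P)) g" for n g
    by (rule continuous_map_retraction [OF compact_space_nsphere that])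
  show "continuous_map (prod_topology (top_of_set {0..1::real}) (nsphere n)) (realization (nerve Q))
      (retraction \<circ> H)"
    if "continuous_map (prod_topology (top_of_set {0..1::real}) (nsphere n))
      (realization (nerve P)) H" for n H
    by (rule continuous_map_retraction [OF compact_space_cylinder [OF compact_space_nsphere] that])
  show "homotopic_with
      (\<lambda>k. \<forall>z\<in>topspace (nsphere n). g z \<in> id ` topspace (realization (nerve Q)) \<longrightarrow> k z = g z)
      (nsphere n) (realization (nerve P)) g (id \<circ> (retraction \<circ> g))"
    if "continuous_map (nsphere n) (realization (nerve P)) g" for n g
    using retraction_deformation [OF compact_space_nsphere that] by (simp add: topspace_realization)
qed

end

section \<open>Covers of simplicial complexes\<close>

lemma cover_vertex_mem_full_subcomplexes:
  fixes K :: "'a set set" and X Y :: "'a set"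
  assumes K: "simplicial_complex K"
  defines "P \<equiv> {\<sigma>\<in>K. \<sigma> \<subseteq> X \<or> \<sigma> \<subseteq> Y \<or> \<sigma> \<inter> (X \<inter> Y) \<noteq> {}}"
    and "Q \<equiv> full_subcomplex K X \<union> full_subcomplex K Y"
  assumes c: "c \<in> nerve P" "\<not> c \<subseteq> Q"
  shows "\<Union>(c \<inter> Q) \<union> (\<Union>c \<inter> (X \<inter> Y)) \<in> Q"
proof -
  let ?G = "\<Union>(c \<inter> Q) \<union> (\<Union>c \<inter> (X \<inter> Y))"
  have top: "\<Union>c \<in> c"
    using c(1) by (rule Union_mem_nerve)
  have c_K: "c \<subseteq> K"
    using c(1) by (auto simp: mem_nerve_iff P_def)
  have not_in: "\<not> \<Union>c \<subseteq> B" if "full_subcomplex K B \<subseteq> Q" for B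
  proof
    assume "\<Union>c \<subseteq> B"
    then have "c \<subseteq> full_subcomplex K B"
      using c_K by (auto simp: full_subcomplex_def)
    with that c(2) show False
      by blast
  qed
  have "\<Union>c \<in> P"
    using top c(1) by (auto simp: mem_nerve_iff)
  moreover have "\<not> \<Union>c \<subseteq> X" "\<not> \<Union>c \<subseteq> Y"
    by (auto intro!: not_in simp: Q_def)
  ultimately have "\<Union>c \<inter> (X \<inter> Y) \<noteq> {}"
    by (auto simp: P_def)
  then have "?G \<noteq> {}" "?G \<subseteq> \<Union>c" "\<Union>c \<in> K"
    using top c_K by auto
  then have "?G \<in> K"
    using simplicial_complexD(3) [OF K] by blast
  moreover have "?G \<subseteq> X \<or> ?G \<subseteq> Y"
  proof (cases "c \<inter> Q = {}")
    case False
    have "c \<inter> Q \<in> nerve P"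
      using simplicial_complexD(3) [OF simplicial_complex_nerve c(1)] False by blast
    then have "\<Union>(c \<inter> Q) \<in> c \<inter> Q"
      by (rule Union_mem_nerve)
    then have "\<Union>(c \<inter> Q) \<subseteq> X \<or> \<Union>(c \<inter> Q) \<subseteq> Y"
      by (auto simp: Q_def full_subcomplex_def)
    then show ?thesis
      by blast
  qed auto
  ultimately show ?thesis
    by (auto simp: Q_def full_subcomplex_def)
qed

lemma nerve_retraction_full_subcomplexes:
  fixes K :: "'a set set" and X Y :: "'a set"
  assumes "simplicial_complex K"
  defines "Q \<equiv> full_subcomplex K X \<union> full_subcomplex K Y"
  shows "nerve_retraction {\<sigma>\<in>K. \<sigma> \<subseteq> X \<or> \<sigma> \<subseteq> Y \<or> \<sigma> \<inter> (X \<inter> Y) \<noteq> {}} Q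
    (\<lambda>c. \<Union>(c \<inter> Q) \<union> (\<Union>c \<inter> (X \<inter> Y)))"
proof
  show "Q \<subseteq> {\<sigma>\<in>K. \<sigma> \<subseteq> X \<or> \<sigma> \<subseteq> Y \<or> \<sigma> \<inter> (X \<inter> Y) \<noteq> {}}"
    by (auto simp: Q_def full_subcomplex_def)
qed (use cover_vertex_mem_full_subcomplexes [OF assms(1)] in \<open>auto simp: Q_def\<close>)

theorem proposition7p3:
  fixes K :: "'a set set" and X Y :: "'a set"
  assumes "simplicial_complex K"
    and "X \<union> Y = vertex_set K"
  defines "A \<equiv> X \<inter> Y"
  defines "P \<equiv> {\<sigma>\<in>K. \<sigma> \<subseteq> X \<or> \<sigma> \<subseteq> Y \<or> \<sigma> \<inter> A \<noteq> {}}"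
  shows "poset_inclusion_weak_equivalence (full_subcomplex K X \<union> full_subcomplex K Y) P"
proof -
  interpret nerve_retraction P "full_subcomplex K X \<union> full_subcomplex K Y"
    "\<lambda>c. \<Union>(c \<inter> (full_subcomplex K X \<union> full_subcomplex K Y)) \<union> (\<Union>c \<inter> A)"
    using nerve_retraction_full_subcomplexes [OF assms(1)] unfolding P_def A_def .
  show ?thesis
    by (rule poset_inclusion_weak_equivalence)
qed

end
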